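(* Let $\mathcal C$ be a concept hierarchy with maximum level $2$ and let $\mathcal N$ be a network with maximum layer $1$ (with fixed weights, all engaged flags always $0$). Let $r_1,r_2$ satisfy: $0\le r_1\le r_2\le1$; $r_1k$ is not an integer; $(r_2')^2\le 2r_1'-(r_1')^2$, where $r_1'k=\lfloor r_1k\rfloor$ and $r_2'k=\lceil r_2k\rceil$. Then $\mathcal N$ does not $(r_1,r_2)$-recognize $\mathcal C$ in the sense of Assumptions 1–3.
   Context: Data model. Fix positive integers $\ell_{max},n,k$. A universal set $D$ of concepts is partitioned into disjoint $D_0,\dots,D_{\ell_{max}}$ with $|D_0|=n$. A concept hierarchy with maximum level $\ell_{max}$ consists of $C\subseteq D$ and $children$: with $C_\ell=C\cap D_\ell$, each $c\in C_\ell$ ($\ell\ge1$) has $children(c)\subseteq C_{\ell-1}$ of size $k$; $|C_{\ell_{max}}|=k$; distinct concepts on the same level have disjoint children sets. $leaves(c)$ is the set of level-$0$ descendants of $c$ (descendants: $c$ itself and, recursively, children of descendants). For $B\subseteq D_0$ and $r\in[0,1]$: $B_0=B\cap C_0$, $B_\ell=\{c\in C_\ell:|children(c)\cap B_{\ell-1}|\ge rk\}$, $supported_r(B)=\bigcup_\ell B_\ell$. Network model. Layers $N_0,\dots,N_{\ell'_{max}}$ of $n$ neurons each; every neuron of $N_\ell$ has an edge to every neuron of $N_{\ell+1}$, no other edges; bijection $rep:D_0\to N_0$. Each edge $(v,u)$ has a fixed weight in $[0,1]$ and each non-input neuron has a threshold $\tau$; discrete time; input firing is set externally; a non-input neuron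 $u$ fires at time $t$ iff $\sum_v weight(v,u)y^v(t-1)\ge\tau$, the sum over neurons $v$ of the layer below. $B\subseteq D_0$ is presented at time $t$ if the input neurons firing at time $t$ are exactly $rep(B)$. Assumptions: (1) every concept $c\in C$ has a unique designated neuron $rep(c)$ (for level-$0$ concepts the input neuron $rep(c)$; for concepts of level $\ge1$ a non-input neuron, in any layer); (2) for every $B\subseteq C_0$ presented at time $t$, if $c\in supported_{r_2}(B)$ then $rep(c)$ fires at time $t+layer(rep(c))$; (3) for every $B\subseteq C_0$ presented at time $t$, if $c\notin supported_{r_1}(B)$ then $rep(c)$ does not fire at time $t+layer(rep(c))$. *)

theory Defs
  imports Main "HOL-Library.Disjoint_Sets" Complex_Main
begin

text \<open>The universal set of concepts is partitioned into levels D 0, ..., D lmax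
  (the universal set D is their union). C is the set of concepts of the hierarchy,
  C_l = C \<inter> D l.\<close>

definition concept_hierarchy ::
  "nat \<Rightarrow> nat \<Rightarrow> nat \<Rightarrow> (nat \<Rightarrow> 'a set) \<Rightarrow> 'a set \<Rightarrow> ('a \<Rightarrow> 'a set) \<Rightarrow> bool" where
  "concept_hierarchy lmax n k D C children \<longleftrightarrow>
     (\<forall>i\<le>lmax. \<forall>j\<le>lmax. i \<noteq> j \<longrightarrow> D i \<inter> D j = {}) \<and>
     finite (D 0) \<and> card (D 0) = n \<and>
     C \<subseteq> (\<Union>l\<le>lmax. D l) \<and>
     (\<forall>l\<in>{1..lmax}. \<forall>c\<in>C \<inter> D l.
        children c \<subseteq> C \<inter> D (l - 1) \<and> finite (children c) \<and> card (children c) = k) \<and>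
     finite (C \<inter> D lmax) \<and> card (C \<inter> D lmax) = k \<and>
     (\<forall>l\<in>{1..lmax}. \<forall>c\<in>C \<inter> D l. \<forall>c'\<in>C \<inter> D l.
        c \<noteq> c' \<longrightarrow> children c \<inter> children c' = {})"

fun supp_level ::
  "real \<Rightarrow> nat \<Rightarrow> (nat \<Rightarrow> 'a set) \<Rightarrow> 'a set \<Rightarrow> ('a \<Rightarrow> 'a set) \<Rightarrow> 'a set \<Rightarrow> nat \<Rightarrow> 'a set" where
  "supp_level r k D C children B 0 = B \<inter> (C \<inter> D 0)"
| "supp_level r k D C children B (Suc l) =
     {c \<in> C \<inter> D (Suc l).
        real (card (children c \<inter> supp_level r k D C children B l)) \<ge> r * real k}"

definition supported ::
  "nat \<Rightarrow> real \<Rightarrow> nat \<Rightarrow> (nat \<Rightarrow> 'a set) \<Rightarrow> 'a set \<Rightarrow> ('a \<Rightarrow> 'a set) \<Rightarrow> 'a set \<Rightarrow> 'a set" where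
  "supported lmax r k D C children B = (\<Union>l\<le>lmax. supp_level r k D C children B l)"

definition network ::
  "nat \<Rightarrow> nat \<Rightarrow> (nat \<Rightarrow> 'b set) \<Rightarrow> ('b \<Rightarrow> 'b \<Rightarrow> real) \<Rightarrow> ('a \<Rightarrow> 'b) \<Rightarrow> 'a set \<Rightarrow> bool" where
  "network lmax' n N w rep D0 \<longleftrightarrow>
     (\<forall>i\<le>lmax'. \<forall>j\<le>lmax'. i \<noteq> j \<longrightarrow> N i \<inter> N j = {}) \<and>
     (\<forall>l\<le>lmax'. finite (N l) \<and> card (N l) = n) \<and>
     (\<forall>l<lmax'. \<forall>v\<in>N l. \<forall>u\<in>N (Suc l). 0 \<le> w v u \<and> w v u \<le> 1) \<and>
     bij_betw rep D0 (N 0)"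

text \<open>If B is presented at time t (input neurons firing at time t are exactly rep ` B),
  then fired_layer ... B l is the set of neurons of layer l firing at time t + l.
  (A neuron of layer l+1 fires at time t+l+1 iff the weighted sum of the layer-l neurons
  firing at time t+l reaches the threshold tau.)\<close>

fun fired_layer ::
  "(nat \<Rightarrow> 'b set) \<Rightarrow> ('b \<Rightarrow> 'b \<Rightarrow> real) \<Rightarrow> real \<Rightarrow> ('a \<Rightarrow> 'b) \<Rightarrow> 'a set \<Rightarrow> nat \<Rightarrow> 'b set" where
  "fired_layer N w \<tau> rep B 0 = rep ` B"
| "fired_layer N w \<tau> rep B (Suc l) =
     {u \<in> N (Suc l). (\<Sum>v\<in>N l. w v u * (if v \<in> fired_layer N w \<tau> rep B l then 1 else 0)) \<ge> \<tau>}"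

definition fires_in_time ::
  "nat \<Rightarrow> (nat \<Rightarrow> 'b set) \<Rightarrow> ('b \<Rightarrow> 'b \<Rightarrow> real) \<Rightarrow> real \<Rightarrow> ('a \<Rightarrow> 'b) \<Rightarrow> 'a set \<Rightarrow> 'b \<Rightarrow> bool" where
  "fires_in_time lmax' N w \<tau> rep B u \<longleftrightarrow>
     (\<exists>l\<le>lmax'. u \<in> N l \<and> u \<in> fired_layer N w \<tau> rep B l)"

definition recognizes ::
  "nat \<Rightarrow> nat \<Rightarrow> (nat \<Rightarrow> 'a set) \<Rightarrow> 'a set \<Rightarrow> ('a \<Rightarrow> 'a set) \<Rightarrow>
   nat \<Rightarrow> (nat \<Rightarrow> 'b set) \<Rightarrow> ('b \<Rightarrow> 'b \<Rightarrow> real) \<Rightarrow> real \<Rightarrow> ('a \<Rightarrow> 'b) \<Rightarrow>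
   real \<Rightarrow> real \<Rightarrow> bool" where
  "recognizes lmax k D C children lmax' N w \<tau> rep r1 r2 \<longleftrightarrow>
     \<comment> \<open>Assumption 1\<close>
     (\<forall>l\<in>{1..lmax}. \<forall>c\<in>C \<inter> D l. \<exists>l'\<in>{1..lmax'}. rep c \<in> N l') \<and>
     \<comment> \<open>Assumption 2\<close>
     (\<forall>B. B \<subseteq> C \<inter> D 0 \<longrightarrow> (\<forall>c\<in>supported lmax r2 k D C children B.
          fires_in_time lmax' N w \<tau> rep B (rep c))) \<and>
     \<comment> \<open>Assumption 3\<close>
     (\<forall>B. B \<subseteq> C \<inter> D 0 \<longrightarrow> (\<forall>c\<in>C. c \<notin> supported lmax r1 k D C children B \<longrightarrow>
          \<not> fires_in_time lmax' N w \<tau> rep B (rep c)))"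

end

theory Submission
  imports Defs
begin

(* With a single layer above the input, the top concept c is represented by one threshold
   neuron, so whether it fires on an input B depends only on the weight of B, i.e. the sum of
   the input weights of the leaves in B.  Let a = floor (r1 k) < r1 k (strict since r1 k is not
   an integer) and b = ceiling (r2 k), and let W be the weight of all leaves below c.
   Averaging yields an input supporting c at ratio r2 (the b lightest leaves under each of b
   suitably light children) of weight at most (b/k)^2 W, and an input not supporting c at
   ratio r1 (all leaves under a suitable set of a children, the a heaviest leaves under every
   other child) of weight at least (2a/k - (a/k)^2) W.  The hypothesis makes the first input
   no heavier than the second, yet the neuron must fire on the first and not on the second. *)

lemma ex_subset_sum_le_average:
  fixes g :: "'a \<Rightarrow> real"
  assumes "finite S" and "m \<le> card S"
  shows "\<exists>T\<subseteq>S. card T = m \<and> real (card S) * sum g T \<le> real m * sum g S"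
  using assms
proof (induction "card S" arbitrary: S)
  case 0
  then show ?case by auto
next
  case (Suc k)
  show ?case
  proof (cases "m = card S")
    case True
    then show ?thesis by blast
  next
    case False
    have "S \<noteq> {}" using Suc.hyps(2) by auto
    then have "Max (g ` S) \<in> g ` S" using Suc.prems(1) by simp
    then obtain x where x: "x \<in> S" "g x = Max (g ` S)" by auto
    then have x_max: "\<forall>y\<in>S. g y \<le> g x" using Suc.prems(1) by simp
    have "k = card (S - {x})" "finite (S - {x})" "m \<le> card (S - {x})"
      using Suc.hyps(2) Suc.prems False x(1) by auto
    then obtain T where T: "T \<subseteq> S - {x}" "card T = m"
      and avg: "real k * sum g T \<le> real m * sum g (S - {x})"
      using Suc.hyps(1) by blast
    have "sum g T \<le> real m * g x"
      using sum_bounded_above[of T g "g x"] T x_max by auto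
    moreover have "sum g S = g x + sum g (S - {x})"
      using sum.remove[OF Suc.prems(1) x(1)] .
    ultimately have "real (card S) * sum g T \<le> real m * sum g S"
      using avg by (simp add: Suc.hyps(2)[symmetric] algebra_simps)
    then show ?thesis using T by blast
  qed
qed

lemma ex_subset_sum_ge_average:
  fixes g :: "'a \<Rightarrow> real"
  assumes "finite S" and "m \<le> card S"
  shows "\<exists>T\<subseteq>S. card T = m \<and> real m * sum g S \<le> real (card S) * sum g T"
  using ex_subset_sum_le_average[OF assms, of "\<lambda>y. - g y"] by (simp add: sum_negf)

lemma ex_light_selection:
  fixes \<omega> :: "'x \<Rightarrow> real" and L :: "'d \<Rightarrow> 'x set"
  assumes K: "finite K" "card K = k"
    and L: "\<And>d. d \<in> K \<Longrightarrow> finite (L d) \<and> card (L d) = k"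
    and "b \<le> k"
  shows "\<exists>K1 T. K1 \<subseteq> K \<and> card K1 = b \<and> (\<forall>d\<in>K. T d \<subseteq> L d \<and> card (T d) = b) \<and>
    real k ^ 2 * (\<Sum>d\<in>K1. sum \<omega> (T d)) \<le> real b ^ 2 * (\<Sum>d\<in>K. sum \<omega> (L d))"
proof -
  have "\<forall>d\<in>K. \<exists>T. T \<subseteq> L d \<and> card T = b \<and> real k * sum \<omega> T \<le> real b * sum \<omega> (L d)"
    using ex_subset_sum_le_average[of _ b \<omega>] L \<open>b \<le> k\<close> by metis
  then obtain T where T: "\<forall>d\<in>K. T d \<subseteq> L d \<and> card (T d) = b \<and>
      real k * sum \<omega> (T d) \<le> real b * sum \<omega> (L d)"
    by metis
  obtain K1 where K1: "K1 \<subseteq> K" "card K1 = b"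
    and K1_avg: "real k * (\<Sum>d\<in>K1. sum \<omega> (T d)) \<le> real b * (\<Sum>d\<in>K. sum \<omega> (T d))"
    using ex_subset_sum_le_average[OF K(1), of b "\<lambda>d. sum \<omega> (T d)"] K(2) \<open>b \<le> k\<close> by auto
  have "real k * (\<Sum>d\<in>K. sum \<omega> (T d)) = (\<Sum>d\<in>K. real k * sum \<omega> (T d))"
    by (simp add: sum_distrib_left)
  also have "\<dots> \<le> (\<Sum>d\<in>K. real b * sum \<omega> (L d))"
    using T by (intro sum_mono) auto
  also have "\<dots> = real b * (\<Sum>d\<in>K. sum \<omega> (L d))"
    by (simp add: sum_distrib_left)
  finally have T_avg: "real k * (\<Sum>d\<in>K. sum \<omega> (T d)) \<le> real b * (\<Sum>d\<in>K. sum \<omega> (L d))" .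
  have "real k ^ 2 * (\<Sum>d\<in>K1. sum \<omega> (T d)) = real k * (real k * (\<Sum>d\<in>K1. sum \<omega> (T d)))"
    by (simp add: power2_eq_square)
  also have "\<dots> \<le> real k * (real b * (\<Sum>d\<in>K. sum \<omega> (T d)))"
    using K1_avg by (rule mult_left_mono) simp
  also have "\<dots> = real b * (real k * (\<Sum>d\<in>K. sum \<omega> (T d)))"
    by simp
  also have "\<dots> \<le> real b * (real b * (\<Sum>d\<in>K. sum \<omega> (L d)))"
    using T_avg by (rule mult_left_mono) simp
  also have "\<dots> = real b ^ 2 * (\<Sum>d\<in>K. sum \<omega> (L d))"
    by (simp add: power2_eq_square)
  finally show ?thesis using K1 T by blast
qed

lemma ex_heavy_selection:
  fixes \<omega> :: "'x \<Rightarrow> real" and L :: "'d \<Rightarrow> 'x set"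
  assumes K: "finite K" "card K = k"
    and L: "\<And>d. d \<in> K \<Longrightarrow> finite (L d) \<and> card (L d) = k"
    and "a \<le> k"
  shows "\<exists>K2 T. K2 \<subseteq> K \<and> card K2 = a \<and> (\<forall>d\<in>K. T d \<subseteq> L d \<and> card (T d) = a) \<and>
    (2 * real a * real k - real a ^ 2) * (\<Sum>d\<in>K. sum \<omega> (L d))
      \<le> real k ^ 2 * (\<Sum>d\<in>K. if d \<in> K2 then sum \<omega> (L d) else sum \<omega> (T d))"
proof -
  have "\<forall>d\<in>K. \<exists>T. T \<subseteq> L d \<and> card T = a \<and> real a * sum \<omega> (L d) \<le> real k * sum \<omega> T"
    using ex_subset_sum_ge_average[of _ a \<omega>] L \<open>a \<le> k\<close> by metis
  then obtain T where T: "\<forall>d\<in>K. T d \<subseteq> L d \<and> card (T d) = a \<and>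
      real a * sum \<omega> (L d) \<le> real k * sum \<omega> (T d)"
    by metis
  define W where "W = (\<Sum>d\<in>K. sum \<omega> (L d))"
  define M where "M = (\<Sum>d\<in>K. sum \<omega> (T d))"
  define gain where "gain d = sum \<omega> (L d) - sum \<omega> (T d)" for d
  obtain K2 where K2: "K2 \<subseteq> K" "card K2 = a"
    and K2_avg: "real a * sum gain K \<le> real k * sum gain K2"
    using ex_subset_sum_ge_average[OF K(1), of a gain] K(2) \<open>a \<le> k\<close> by auto
  have "real a * W = (\<Sum>d\<in>K. real a * sum \<omega> (L d))"
    unfolding W_def by (simp add: sum_distrib_left)
  also have "\<dots> \<le> (\<Sum>d\<in>K. real k * sum \<omega> (T d))"
    using T by (intro sum_mono) auto
  also have "\<dots> = real k * M"
    unfolding M_def by (simp add: sum_distrib_left)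
  finally have M_avg: "real a * W \<le> real k * M" .
  have "(\<Sum>d\<in>K. if d \<in> K2 then sum \<omega> (L d) else sum \<omega> (T d)) = M + sum gain K2"
    unfolding M_def gain_def using K2(1) K(1)
    by (simp add: sum.If_cases sum_subtractf Int_absorb1 Diff_eq sum.subset_diff[of K2 K])
  moreover have "sum gain K = W - M"
    unfolding gain_def W_def M_def by (simp add: sum_subtractf)
  moreover have "(real k - real a) * (real a * W) \<le> (real k - real a) * (real k * M)"
    using M_avg \<open>a \<le> k\<close> by (simp add: mult_left_mono)
  moreover have "real k * (real a * (W - M)) \<le> real k * (real k * sum gain K2)"
    using K2_avg \<open>sum gain K = W - M\<close> by (simp add: mult_left_mono)
  \<comment> \<open>k^2 (M + gain K2) \<ge> k^2 M + k a (W - M) = k (k - a) M + k a W \<ge> (k - a) a W + k a W\<close>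
  ultimately have "(2 * real a * real k - real a ^ 2) * W
      \<le> real k ^ 2 * (\<Sum>d\<in>K. if d \<in> K2 then sum \<omega> (L d) else sum \<omega> (T d))"
    by (simp add: algebra_simps power2_eq_square)
  then show ?thesis using K2 T unfolding W_def by blast
qed

lemma rounded_ratio_bounds:
  fixes r1 r2 :: real and k :: nat
  assumes "0 < k" and "0 \<le> r1" and "r1 \<le> r2" and "r2 \<le> 1" and "r1 * real k \<notin> \<int>"
    and "(of_int \<lceil>r2 * real k\<rceil> / real k)\<^sup>2
           \<le> 2 * (of_int \<lfloor>r1 * real k\<rfloor> / real k) - (of_int \<lfloor>r1 * real k\<rfloor> / real k)\<^sup>2"
  obtains a b :: nat where "real a < r1 * real k" and "a \<le> k"
    and "r2 * real k \<le> real b" and "b \<le> k"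
    and "real b ^ 2 \<le> 2 * real a * real k - real a ^ 2"
proof
  define a where "a = nat \<lfloor>r1 * real k\<rfloor>"
  define b where "b = nat \<lceil>r2 * real k\<rceil>"
  have a_floor: "real a = of_int \<lfloor>r1 * real k\<rfloor>"
    unfolding a_def using \<open>0 \<le> r1\<close> by simp
  have b_ceiling: "real b = of_int \<lceil>r2 * real k\<rceil>"
    unfolding b_def using \<open>0 \<le> r1\<close> \<open>r1 \<le> r2\<close> by simp
  have "real a \<noteq> r1 * real k"
    using a_floor \<open>r1 * real k \<notin> \<int>\<close> by (metis Ints_of_int)
  then show "real a < r1 * real k"
    using a_floor by linarith
  moreover have "r1 * real k \<le> real k"
    using \<open>0 \<le> r1\<close> \<open>r1 \<le> r2\<close> \<open>r2 \<le> 1\<close> by (simp add: mult_left_le_one_le)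
  ultimately show "a \<le> k"
    by linarith
  show "r2 * real k \<le> real b"
    using b_ceiling by simp
  have "r2 * real k \<le> real k"
    using \<open>0 \<le> r1\<close> \<open>r1 \<le> r2\<close> \<open>r2 \<le> 1\<close> by (simp add: mult_left_le_one_le)
  then show "b \<le> k"
    unfolding b_def by (simp add: ceiling_le_iff nat_le_iff)
  have "real b ^ 2 = real k ^ 2 * (real b / real k) ^ 2"
    using \<open>0 < k\<close> by (simp add: power_divide)
  also have "\<dots> \<le> real k ^ 2 * (2 * (real a / real k) - (real a / real k) ^ 2)"
    using assms(6) unfolding a_floor b_ceiling by (simp add: mult_left_mono)
  also have "\<dots> = 2 * real a * real k - real a ^ 2"
    using \<open>0 < k\<close> by (simp add: power2_eq_square field_simps)
  finally show "real b ^ 2 \<le> 2 * real a * real k - real a ^ 2" .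
qed

lemma concept_hierarchy_levels_disjoint:
  assumes "concept_hierarchy lmax n k D C children" and "i \<le> lmax" and "j \<le> lmax" and "i \<noteq> j"
  shows "D i \<inter> D j = {}"
proof -
  have "\<forall>i\<le>lmax. \<forall>j\<le>lmax. i \<noteq> j \<longrightarrow> D i \<inter> D j = {}"
    using assms(1) unfolding concept_hierarchy_def by (rule conjunct1)
  then show ?thesis using assms(2-4) by blast
qed

lemma concept_hierarchy_top_nonempty:
  assumes "concept_hierarchy lmax n k D C children" and "0 < k"
  shows "C \<inter> D lmax \<noteq> {}"
  using assms unfolding concept_hierarchy_def by auto

lemma concept_hierarchy_children:
  assumes "concept_hierarchy lmax n k D C children" and "l \<in> {1..lmax}" and "c \<in> C \<inter> D l"
  shows "children c \<subseteq> C \<inter> D (l - 1)" and "finite (children c)" and "card (children c) = k"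
  using assms unfolding concept_hierarchy_def by blast+

lemma concept_hierarchy_children_disjoint:
  assumes "concept_hierarchy lmax n k D C children" and "l \<in> {1..lmax}"
    and "c \<in> C \<inter> D l" and "c' \<in> C \<inter> D l" and "c \<noteq> c'"
  shows "children c \<inter> children c' = {}"
  using assms unfolding concept_hierarchy_def by blast

lemma concept_hierarchy_grandchildren:
  assumes CH: "concept_hierarchy lmax n k D C children" and l: "l \<in> {2..lmax}"
    and "c \<in> C \<inter> D l" and "d \<in> children c"
  shows "children d \<subseteq> C \<inter> D (l - 2)" and "finite (children d)" and "card (children d) = k"
proof -
  have "d \<in> C \<inter> D (l - 1)"
    using concept_hierarchy_children(1)[OF CH _ \<open>c \<in> C \<inter> D l\<close>] l \<open>d \<in> children c\<close> by auto
  moreover have "l - 1 \<in> {1..lmax}" and "l - 1 - 1 = l - 2" using l by auto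
  ultimately show "children d \<subseteq> C \<inter> D (l - 2)" "finite (children d)" "card (children d) = k"
    using concept_hierarchy_children[OF CH] by metis+
qed

lemma supp_level_subset: "supp_level r k D C children B l \<subseteq> C \<inter> D l"
  by (cases l) auto

lemma supported_iff_supp_level:
  assumes CH: "concept_hierarchy lmax n k D C children" and "l \<le> lmax" and "c \<in> D l"
  shows "c \<in> supported lmax r k D C children B \<longleftrightarrow> c \<in> supp_level r k D C children B l"
proof
  assume "c \<in> supported lmax r k D C children B"
  then obtain l' where "l' \<le> lmax" and c_l': "c \<in> supp_level r k D C children B l'"
    unfolding supported_def by blast
  have "l' = l"
  proof (rule ccontr)
    assume "l' \<noteq> l"
    then have "D l' \<inter> D l = {}"
      using concept_hierarchy_levels_disjoint[OF CH \<open>l' \<le> lmax\<close> \<open>l \<le> lmax\<close>] by simp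
    moreover have "c \<in> D l'" using c_l' supp_level_subset by fast
    ultimately show False using \<open>c \<in> D l\<close> by fast
  qed
  then show "c \<in> supp_level r k D C children B l" using c_l' by simp
next
  assume "c \<in> supp_level r k D C children B l"
  then show "c \<in> supported lmax r k D C children B"
    unfolding supported_def using \<open>l \<le> lmax\<close> by blast
qed

lemma children_Int_UNION:
  assumes CH: "concept_hierarchy lmax n k D C children" and l: "l \<in> {1..lmax}"
    and K: "K \<subseteq> C \<inter> D l" and A: "\<And>d. d \<in> K \<Longrightarrow> A d \<subseteq> children d"
    and d: "d \<in> C \<inter> D l"
  shows "children d \<inter> (\<Union>d'\<in>K. A d') = (if d \<in> K then A d else {})"
proof -
  have pieces: "children d \<inter> A d' = (if d' = d then A d else {})" if "d' \<in> K" for d'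
  proof (cases "d' = d")
    case False
    then have "children d \<inter> children d' = {}"
      using concept_hierarchy_children_disjoint[OF CH l d] K that by auto
    then show ?thesis using A[OF that] False by auto
  qed (use A that in auto)
  have "children d \<inter> (\<Union>d'\<in>K. A d') = (\<Union>d'\<in>K. children d \<inter> A d')"
    by blast
  also have "\<dots> = (\<Union>d'\<in>K. if d' = d then A d else {})"
    by (rule SUP_cong[OF refl]) (rule pieces)
  also have "\<dots> = (if d \<in> K then A d else {})"
    by auto
  finally show ?thesis .
qed

lemma sum_UNION_children:
  assumes CH: "concept_hierarchy lmax n k D C children" and l: "l \<in> {1..lmax}"
    and K: "K \<subseteq> C \<inter> D l" "finite K" and A: "\<And>d. d \<in> K \<Longrightarrow> A d \<subseteq> children d"
  shows "sum \<omega> (\<Union>d\<in>K. A d) = (\<Sum>d\<in>K. sum \<omega> (A d))"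
proof (rule sum.UNION_disjoint)
  show "finite K" by fact
  show "\<forall>d\<in>K. finite (A d)"
    using A K concept_hierarchy_children(2)[OF CH l] by (meson finite_subset subsetD)
  show "\<forall>d\<in>K. \<forall>d'\<in>K. d \<noteq> d' \<longrightarrow> A d \<inter> A d' = {}"
  proof (intro ballI impI)
    fix d d' assume "d \<in> K" "d' \<in> K" "d \<noteq> d'"
    then have "children d \<inter> children d' = {}"
      using concept_hierarchy_children_disjoint[OF CH l] K by blast
    then show "A d \<inter> A d' = {}" using A \<open>d \<in> K\<close> \<open>d' \<in> K\<close> by blast
  qed
qed

lemma supported_level2_iff:
  assumes CH: "concept_hierarchy 2 n k D C children" and c: "c \<in> C \<inter> D 2"
    and "0 < r" and "0 < k"
    and K: "K \<subseteq> children c" and A: "\<And>d. d \<in> K \<Longrightarrow> A d \<subseteq> children d"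
  shows "c \<in> supported 2 r k D C children (\<Union>d\<in>K. A d)
    \<longleftrightarrow> r * real k \<le> real (card {d \<in> K. r * real k \<le> real (card (A d))})"
proof -
  let ?B = "\<Union>d\<in>K. A d"
  let ?supp = "supp_level r k D C children ?B"
  have c_children: "children c \<subseteq> C \<inter> D 1" "finite (children c)"
    using concept_hierarchy_children[OF CH _ c] by auto
  have leaves: "children d \<subseteq> C \<inter> D 0" if "d \<in> children c" for d
    using concept_hierarchy_grandchildren(1)[OF CH _ c that] by simp
  have B_leaves: "?B \<subseteq> C \<inter> D 0"
    using A K leaves by blast
  have "0 < r * real k" using \<open>0 < r\<close> \<open>0 < k\<close> by simp
  have K_level: "K \<subseteq> C \<inter> D 1" using K c_children by blast
  have "children d \<inter> ?B = (if d \<in> K then A d else {})" if "d \<in> children c" for d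
    using c_children that by (intro children_Int_UNION[OF CH _ K_level A]) auto
  \<comment> \<open>children of c outside K get no leaves of ?B, and 0 < r keeps them unsupported\<close>
  then have "children c \<inter> ?supp 1 = {d \<in> K. r * real k \<le> real (card (A d))}"
    using B_leaves K c_children \<open>0 < r * real k\<close> by (auto simp: Int_absorb2 split: if_splits)
  moreover have "c \<in> supported 2 r k D C children ?B \<longleftrightarrow> c \<in> ?supp 2"
    using supported_iff_supp_level[OF CH] c by simp
  ultimately show ?thesis
    using c by (simp add: numeral_2_eq_2)
qed

lemma ex_supported_input_light:
  assumes CH: "concept_hierarchy 2 n k D C children" and c: "c \<in> C \<inter> D 2"
    and "0 < r" and "0 < k" and "r * real k \<le> real b" and "b \<le> k"
  shows "\<exists>B\<subseteq>C \<inter> D 0. c \<in> supported 2 r k D C children B \<and>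
    real k ^ 2 * sum \<omega> B \<le> real b ^ 2 * (\<Sum>d\<in>children c. sum \<omega> (children d))"
proof -
  have K: "children c \<subseteq> C \<inter> D 1" "finite (children c)" "card (children c) = k"
    using concept_hierarchy_children[OF CH _ c] by auto
  have L: "children d \<subseteq> C \<inter> D 0" "finite (children d)" "card (children d) = k"
    if "d \<in> children c" for d
    using concept_hierarchy_grandchildren[OF CH _ c that] by simp_all
  obtain K1 T where K1: "K1 \<subseteq> children c" "card K1 = b"
    and T: "\<forall>d\<in>children c. T d \<subseteq> children d \<and> card (T d) = b"
    and light: "real k ^ 2 * (\<Sum>d\<in>K1. sum \<omega> (T d))
      \<le> real b ^ 2 * (\<Sum>d\<in>children c. sum \<omega> (children d))"
    using ex_light_selection[OF K(2,3) _ \<open>b \<le> k\<close>, of children \<omega>] L by blast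
  have T_sub: "T d \<subseteq> children d" if "d \<in> K1" for d
    using T K1(1) that by blast
  have K1_level: "K1 \<subseteq> C \<inter> D 1" and "finite K1"
    using K1(1) K(1,2) finite_subset by blast+
  define B where "B = (\<Union>d\<in>K1. T d)"
  have B_leaves: "B \<subseteq> C \<inter> D 0"
    unfolding B_def using T_sub K1(1) L(1) by blast
  have "{d \<in> K1. r * real k \<le> real (card (T d))} = K1"
    using K1(1) T \<open>r * real k \<le> real b\<close> by auto
  then have "c \<in> supported 2 r k D C children B"
    using supported_level2_iff[OF CH c \<open>0 < r\<close> \<open>0 < k\<close> K1(1) T_sub]
      K1(2) \<open>r * real k \<le> real b\<close> unfolding B_def by simp
  moreover have "sum \<omega> B = (\<Sum>d\<in>K1. sum \<omega> (T d))"
    unfolding B_def by (rule sum_UNION_children[OF CH _ K1_level \<open>finite K1\<close> T_sub]) simp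
  then have "real k ^ 2 * sum \<omega> B \<le> real b ^ 2 * (\<Sum>d\<in>children c. sum \<omega> (children d))"
    using light by simp
  ultimately show ?thesis
    using B_leaves by blast
qed

lemma ex_unsupported_input_heavy:
  assumes CH: "concept_hierarchy 2 n k D C children" and c: "c \<in> C \<inter> D 2"
    and "0 < k" and "real a < r * real k" and "a \<le> k"
  shows "\<exists>B\<subseteq>C \<inter> D 0. c \<notin> supported 2 r k D C children B \<and>
    (2 * real a * real k - real a ^ 2) * (\<Sum>d\<in>children c. sum \<omega> (children d))
      \<le> real k ^ 2 * sum \<omega> B"
proof -
  have "0 < r * real k" using \<open>real a < r * real k\<close> by (smt (verit) of_nat_0_le_iff)
  then have "0 < r" using \<open>0 < k\<close> by (simp add: zero_less_mult_iff)
  have K: "children c \<subseteq> C \<inter> D 1" "finite (children c)" "card (children c) = k"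
    using concept_hierarchy_children[OF CH _ c] by auto
  have L: "children d \<subseteq> C \<inter> D 0" "finite (children d)" "card (children d) = k"
    if "d \<in> children c" for d
    using concept_hierarchy_grandchildren[OF CH _ c that] by simp_all
  obtain K2 T where K2: "K2 \<subseteq> children c" "card K2 = a"
    and T: "\<forall>d\<in>children c. T d \<subseteq> children d \<and> card (T d) = a"
    and heavy: "(2 * real a * real k - real a ^ 2) * (\<Sum>d\<in>children c. sum \<omega> (children d))
      \<le> real k ^ 2 * (\<Sum>d\<in>children c. if d \<in> K2 then sum \<omega> (children d) else sum \<omega> (T d))"
    using ex_heavy_selection[OF K(2,3) _ \<open>a \<le> k\<close>, of children \<omega>] L by blast
  define A where "A d = (if d \<in> K2 then children d else T d)" for d
  have A_sub: "A d \<subseteq> children d" if "d \<in> children c" for d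
    unfolding A_def using T that by auto
  define B where "B = (\<Union>d\<in>children c. A d)"
  have B_leaves: "B \<subseteq> C \<inter> D 0"
    unfolding B_def using A_sub L(1) by blast
  have "{d \<in> children c. r * real k \<le> real (card (A d))} \<subseteq> K2"
    unfolding A_def using T \<open>real a < r * real k\<close> by auto
  then have "card {d \<in> children c. r * real k \<le> real (card (A d))} \<le> a"
    using K2 K(2) by (metis card_mono finite_subset)
  then have unsupported: "c \<notin> supported 2 r k D C children B"
    using supported_level2_iff[OF CH c \<open>0 < r\<close> \<open>0 < k\<close> subset_refl A_sub]
      \<open>real a < r * real k\<close> unfolding B_def by linarith
  have "sum \<omega> B = (\<Sum>d\<in>children c. sum \<omega> (A d))"
    unfolding B_def by (rule sum_UNION_children[OF CH _ K(1,2) A_sub]) simp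
  also have "\<dots> = (\<Sum>d\<in>children c. if d \<in> K2 then sum \<omega> (children d) else sum \<omega> (T d))"
    by (rule sum.cong) (simp_all add: A_def)
  finally have "(2 * real a * real k - real a ^ 2) * (\<Sum>d\<in>children c. sum \<omega> (children d))
      \<le> real k ^ 2 * sum \<omega> B"
    using heavy by simp
  then show ?thesis
    using B_leaves unsupported by blast
qed

lemma network_input_weight_nonneg:
  assumes "network lmax' n N w rep D0" and "0 < lmax'" and "y \<in> D0" and "u \<in> N 1"
  shows "0 \<le> w (rep y) u"
proof -
  have "rep y \<in> N 0"
    using assms(1,3) unfolding network_def by (meson bij_betw_apply)
  then show ?thesis
    using assms(1,2,4) unfolding network_def by simp
qed

lemma fires_in_time_first_layer_iff:
  assumes NW: "network lmax' n N w rep D0" and "1 \<le> lmax'" and u: "u \<in> N 1" and B: "B \<subseteq> D0"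
  shows "fires_in_time lmax' N w \<tau> rep B u \<longleftrightarrow> \<tau> \<le> (\<Sum>y\<in>B. w (rep y) u)"
proof -
  have layers_disjoint: "N l \<inter> N 1 = {}" if "l \<le> lmax'" "l \<noteq> 1" for l
    using NW \<open>1 \<le> lmax'\<close> that unfolding network_def by blast
  have "finite (N 0)" and rep: "bij_betw rep D0 (N 0)"
    using NW unfolding network_def by simp_all
  have "fires_in_time lmax' N w \<tau> rep B u \<longleftrightarrow> u \<in> fired_layer N w \<tau> rep B 1"
    unfolding fires_in_time_def using u layers_disjoint \<open>1 \<le> lmax'\<close> by blast
  also have "\<dots> \<longleftrightarrow> \<tau> \<le> (\<Sum>v\<in>N 0. w v u * (if v \<in> rep ` B then 1 else 0))"
    using u by simp
  also have "(\<Sum>v\<in>N 0. w v u * (if v \<in> rep ` B then 1 else 0)) = (\<Sum>v\<in>rep ` B. w v u)"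
  proof -
    have "rep ` B \<subseteq> N 0" using B rep by (meson bij_betw_apply image_subset_iff subsetD)
    then show ?thesis
      using sum.inter_restrict[OF \<open>finite (N 0)\<close>, of "\<lambda>v. w v u" "rep ` B"]
      by (simp add: Int_absorb1 if_distrib cong: if_cong)
  qed
  also have "\<dots> = (\<Sum>y\<in>B. w (rep y) u)"
    using B rep by (intro sum.reindex_cong[OF _ refl refl]) (meson bij_betw_imp_inj_on inj_on_subset)
  finally show ?thesis .
qed

lemma recognizes_rep_first_layer:
  assumes "recognizes lmax k D C children 1 N w \<tau> rep r1 r2"
    and "l \<in> {1..lmax}" and "c \<in> C \<inter> D l"
  shows "rep c \<in> N 1"
proof -
  have "\<forall>l\<in>{1..lmax}. \<forall>c\<in>C \<inter> D l. \<exists>l'\<in>{1..1}. rep c \<in> N l'"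
    using assms(1) unfolding recognizes_def by (rule conjunct1)
  then show ?thesis using assms(2,3) by auto
qed

lemma recognizes_first_layer_weight_gap:
  assumes NW: "network 1 n N w rep (D 0)"
    and rec: "recognizes lmax k D C children 1 N w \<tau> rep r1 r2"
    and "l \<in> {1..lmax}" and c: "c \<in> C \<inter> D l"
    and B1: "B1 \<subseteq> C \<inter> D 0" "c \<in> supported lmax r2 k D C children B1"
    and B2: "B2 \<subseteq> C \<inter> D 0" "c \<notin> supported lmax r1 k D C children B2"
  shows "(\<Sum>y\<in>B2. w (rep y) (rep c)) < (\<Sum>y\<in>B1. w (rep y) (rep c))"
proof -
  have u: "rep c \<in> N 1"
    using recognizes_rep_first_layer[OF rec \<open>l \<in> {1..lmax}\<close> c] .
  have fires: "fires_in_time 1 N w \<tau> rep B (rep c) \<longleftrightarrow> \<tau> \<le> (\<Sum>y\<in>B. w (rep y) (rep c))"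
    if "B \<subseteq> C \<inter> D 0" for B
    using fires_in_time_first_layer_iff[OF NW _ u] that by auto
  note recognition = rec[unfolded recognizes_def]
  have "fires_in_time 1 N w \<tau> rep B1 (rep c)"
    using recognition[THEN conjunct2, THEN conjunct1] B1 by blast
  moreover have "\<not> fires_in_time 1 N w \<tau> rep B2 (rep c)"
    using recognition[THEN conjunct2, THEN conjunct2] B2 c by blast
  ultimately show ?thesis
    using fires B1(1) B2(1) by fastforce
qed

theorem mainTheorem3:
  fixes D :: "nat \<Rightarrow> 'a set" and C :: "'a set" and children :: "'a \<Rightarrow> 'a set"
    and N :: "nat \<Rightarrow> 'b set" and w :: "'b \<Rightarrow> 'b \<Rightarrow> real" and \<tau> :: real
    and rep :: "'a \<Rightarrow> 'b" and n k :: nat and r1 r2 :: real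
  assumes "n > 0" and "k > 0"
    and "concept_hierarchy 2 n k D C children"
    and "network 1 n N w rep (D 0)"
    and "0 \<le> r1" and "r1 \<le> r2" and "r2 \<le> 1"
    and "r1 * real k \<notin> \<int>"
    and "(of_int \<lceil>r2 * real k\<rceil> / real k)\<^sup>2
           \<le> 2 * (of_int \<lfloor>r1 * real k\<rfloor> / real k) - (of_int \<lfloor>r1 * real k\<rfloor> / real k)\<^sup>2"
  shows "\<not> recognizes 2 k D C children 1 N w \<tau> rep r1 r2"
proof
  assume rec: "recognizes 2 k D C children 1 N w \<tau> rep r1 r2"
  note CH = assms(3) and NW = assms(4)
  obtain a b :: nat where a: "real a < r1 * real k" "a \<le> k" and b: "r2 * real k \<le> real b" "b \<le> k"
    and ab: "real b ^ 2 \<le> 2 * real a * real k - real a ^ 2"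
    using rounded_ratio_bounds[OF assms(2,5-9)] .
  have "0 < r2" using assms(5,6,8) by (cases "r1 = 0") auto
  obtain c where c: "c \<in> C \<inter> D 2" using concept_hierarchy_top_nonempty[OF CH assms(2)] by blast
  define \<omega> where "\<omega> y = w (rep y) (rep c)" for y
  define W where "W = (\<Sum>d\<in>children c. sum \<omega> (children d))"
  have "0 \<le> W"
    unfolding W_def \<omega>_def
    using concept_hierarchy_grandchildren(1)[OF CH _ c] recognizes_rep_first_layer[OF rec _ c]
      network_input_weight_nonneg[OF NW] by (force intro!: sum_nonneg)
  obtain B1 where B1: "B1 \<subseteq> C \<inter> D 0" "c \<in> supported 2 r2 k D C children B1"
    and light: "real k ^ 2 * sum \<omega> B1 \<le> real b ^ 2 * W"
    using ex_supported_input_light[OF CH c \<open>0 < r2\<close> assms(2) b] unfolding W_def by blast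
  obtain B2 where B2: "B2 \<subseteq> C \<inter> D 0" "c \<notin> supported 2 r1 k D C children B2"
    and heavy: "(2 * real a * real k - real a ^ 2) * W \<le> real k ^ 2 * sum \<omega> B2"
    using ex_unsupported_input_heavy[OF CH c assms(2) a] unfolding W_def by blast
  have "real k ^ 2 * sum \<omega> B2 < real k ^ 2 * sum \<omega> B1"
    using recognizes_first_layer_weight_gap[OF NW rec _ c B1 B2] assms(2) unfolding \<omega>_def by simp
  moreover have "real b ^ 2 * W \<le> (2 * real a * real k - real a ^ 2) * W"
    using ab \<open>0 \<le> W\<close> by (rule mult_right_mono)
  ultimately show False
    using light heavy by linarith
qed

end
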